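(* The only rational periodic points of $f(x)=x^2-\tfrac{29}{16}$ are $-\tfrac14,-\tfrac74,\tfrac54$, which form a $3$-cycle. In particular $f$ has exactly $8$ rational points that are periodic or preperiodic.
   Context: A point $x$ is preperiodic for $f$ if some iterate $f^k(x)$, $k\ge1$, is periodic while $x$ itself is not periodic. *)

theory Defs
  imports Complex_Main
begin

definition periodic_pt :: "('a \<Rightarrow> 'a) \<Rightarrow> 'a \<Rightarrow> bool" where
  "periodic_pt f x \<longleftrightarrow> (\<exists>n\<ge>1. (f ^^ n) x = x)"

definition preperiodic_pt :: "('a \<Rightarrow> 'a) \<Rightarrow> 'a \<Rightarrow> bool" where
  "preperiodic_pt f x \<longleftrightarrow> (\<exists>k\<ge>1. periodic_pt f ((f ^^ k) x)) \<and> \<not> periodic_pt f x"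

definition fq :: "rat \<Rightarrow> rat" where
  "fq x = x ^ 2 - 29 / 16"

end

theory Submission
  imports Defs
begin

text \<open>In the coordinate y = 4x the map becomes y \<mapsto> (y^2 - 29)/4. Unless y is an odd
  integer, the denominator of y strictly grows along the orbit, and for |x| \<ge> 2 the absolute
  value strictly grows; either way the orbit never repeats. This leaves the eight values
  x = a/4 with a odd and |a| < 8, which are checked by hand: three form a 3-cycle and the
  other five land in it after one or two steps.\<close>

lemma periodic_or_preperiodic_iff:
  "periodic_pt f x \<or> preperiodic_pt f x \<longleftrightarrow> (\<exists>k. periodic_pt f ((f ^^ k) x))"
proof
  assume "periodic_pt f x \<or> preperiodic_pt f x"
  then show "\<exists>k. periodic_pt f ((f ^^ k) x)"
    unfolding preperiodic_pt_def by (metis funpow_0)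
next
  assume "\<exists>k. periodic_pt f ((f ^^ k) x)"
  then obtain k where "periodic_pt f ((f ^^ k) x)" by blast
  then show "periodic_pt f x \<or> preperiodic_pt f x"
    unfolding preperiodic_pt_def by (metis funpow_0 less_one not_less)
qed

lemma funpow_invariant:
  assumes "\<And>y. P y \<Longrightarrow> P (f y)" and "P x"
  shows "P ((f ^^ n) x)"
  by (induction n) (simp_all add: assms)

lemma not_periodic_or_preperiodic_if_escaping:
  fixes m :: "'a \<Rightarrow> 'b::linorder"
  assumes escape: "\<And>y. B y \<Longrightarrow> B (f y) \<and> m y < m (f y)" and "B x"
  shows "\<not> (periodic_pt f x \<or> preperiodic_pt f x)"
proof
  assume "periodic_pt f x \<or> preperiodic_pt f x"
  then obtain k where "periodic_pt f ((f ^^ k) x)"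
    unfolding periodic_or_preperiodic_iff by blast
  then obtain n where "n \<ge> 1" and period: "(f ^^ n) ((f ^^ k) x) = (f ^^ k) x"
    unfolding periodic_pt_def by blast
  have B_orbit: "B ((f ^^ j) x)" for j
    using funpow_invariant[of B f] escape \<open>B x\<close> by blast
  have "m ((f ^^ k) x) < m ((f ^^ (n + k)) x)"
    using lift_Suc_mono_less[of "\<lambda>j. m ((f ^^ j) x)"] escape B_orbit \<open>n \<ge> 1\<close> by simp
  with period show False
    by (simp add: funpow_add)
qed

lemma not_periodic_if_image_in_invariant:
  assumes invariant: "\<And>y. y \<in> C \<Longrightarrow> f y \<in> C" and "f x \<in> C" and "x \<notin> C"
  shows "\<not> periodic_pt f x"
proof
  assume "periodic_pt f x"
  then obtain n where "n \<ge> 1" and period: "(f ^^ n) x = x"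
    unfolding periodic_pt_def by blast
  then obtain j where "n = Suc j"
    by (cases n) auto
  then have "(f ^^ n) x = (f ^^ j) (f x)"
    by (simp only: funpow_Suc_right comp_apply)
  also have "\<dots> \<in> C"
    using funpow_invariant[of "\<lambda>y. y \<in> C"] invariant \<open>f x \<in> C\<close> by blast
  finally show False
    using period \<open>x \<notin> C\<close> by simp
qed

definition rat_denom :: "rat \<Rightarrow> int" where
  "rat_denom y = snd (quotient_of y)"

lemma rat_denom_pos: "0 < rat_denom y"
  by (simp add: rat_denom_def quotient_of_denom_pos')

lemma rat_denom_eq_1_iff: "rat_denom y = 1 \<longleftrightarrow> y \<in> \<int>"
proof
  assume "rat_denom y = 1"
  then obtain n where "quotient_of y = (n, 1)"
    unfolding rat_denom_def by (metis prod.collapse)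
  then show "y \<in> \<int>"
    using quotient_of_div by fastforce
next
  assume "y \<in> \<int>"
  then show "rat_denom y = 1"
    by (auto simp: rat_denom_def elim: Ints_cases)
qed

lemma rat_denom_square_dvd:
  fixes c :: int
  shows "rat_denom y ^ 2 dvd rat_denom ((y\<^sup>2 - of_int c) / 4)"
proof -
  obtain n d where nd: "quotient_of y = (n, d)"
    by fastforce
  obtain p q where pq: "quotient_of ((y\<^sup>2 - of_int c) / 4) = (p, q)"
    by fastforce
  have "d > 0" "q > 0" "coprime n d"
    using nd pq by (simp_all add: quotient_of_denom_pos quotient_of_coprime)
  have "of_int p / of_int q = ((of_int n / of_int d)\<^sup>2 - of_int c) / (4 :: rat)"
    using quotient_of_div[OF nd] quotient_of_div[OF pq] by simp
  then have "(of_int (q * n\<^sup>2) :: rat) = of_int (d\<^sup>2 * (4 * p + c * q))"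
    using \<open>d > 0\<close> \<open>q > 0\<close> by (simp add: field_simps)
  then have "q * n\<^sup>2 = d\<^sup>2 * (4 * p + c * q)"
    by (simp only: of_int_eq_iff)
  then have "d\<^sup>2 dvd q * n\<^sup>2"
    by (metis dvd_triv_left)
  moreover have "coprime (d\<^sup>2) (n\<^sup>2)"
    using \<open>coprime n d\<close> by (simp add: coprime_commute)
  ultimately have "d\<^sup>2 dvd q"
    by (simp add: coprime_dvd_mult_left_iff)
  then show ?thesis
    using nd pq by (simp add: rat_denom_def)
qed

lemma even_integer_step:
  fixes a c :: int
  assumes "even a" and "odd c"
  shows "((of_int a)\<^sup>2 - of_int c) / 4 \<notin> (\<int> :: rat set)"
proof
  assume "((of_int a)\<^sup>2 - of_int c) / 4 \<in> (\<int> :: rat set)"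
  then obtain b where "((of_int a)\<^sup>2 - of_int c) / 4 = (of_int b :: rat)"
    by (elim Ints_cases)
  then have "(of_int c :: rat) = of_int (a\<^sup>2 - 4 * b)"
    by (simp add: field_simps)
  then have "c = a\<^sup>2 - 4 * b"
    by (simp only: of_int_eq_iff)
  with assms show False
    by simp
qed

lemma non_odd_integer_step:
  fixes c :: int
  assumes "y \<notin> of_int ` {a. odd a}" and "odd c"
  defines "z \<equiv> (y\<^sup>2 - of_int c) / 4"
  shows "z \<notin> of_int ` {a. odd a} \<and> rat_denom y < rat_denom z"
proof -
  have "rat_denom y < rat_denom z"
  proof (cases "y \<in> \<int>")
    case True
    then obtain a where "y = of_int a"
      by (elim Ints_cases)
    with assms(1) have "even a"
      by blast
    then have "rat_denom z \<noteq> 1"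
      using even_integer_step[OF _ \<open>odd c\<close>] \<open>y = of_int a\<close>
      by (simp add: z_def rat_denom_eq_1_iff)
    moreover have "rat_denom y = 1"
      using True by (simp add: rat_denom_eq_1_iff)
    ultimately show ?thesis
      using rat_denom_pos[of z] by linarith
  next
    case False
    then have "1 < rat_denom y"
      using rat_denom_pos[of y] rat_denom_eq_1_iff[of y] by linarith
    then have "rat_denom y < rat_denom y ^ 2"
      by (simp add: power2_eq_square)
    also have "\<dots> \<le> rat_denom z"
      using rat_denom_square_dvd[of y c] rat_denom_pos[of z] by (simp add: z_def zdvd_imp_le)
    finally show ?thesis .
  qed
  moreover have "z \<notin> \<int>"
    using calculation rat_denom_pos[of y] by (auto simp flip: rat_denom_eq_1_iff)
  ultimately show ?thesis
    by auto
qed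

lemma four_fq: "4 * fq x = ((4 * x)\<^sup>2 - of_int 29) / 4"
  by (simp add: fq_def field_simps power2_eq_square)

lemma periodic_or_preperiodic_fq_four_times_odd:
  assumes "periodic_pt fq x \<or> preperiodic_pt fq x"
  shows "4 * x \<in> of_int ` {a. odd a}"
proof (rule ccontr)
  have step: "4 * fq z \<notin> of_int ` {a. odd a} \<and> rat_denom (4 * z) < rat_denom (4 * fq z)"
    if "4 * z \<notin> of_int ` {a. odd a}" for z
    unfolding four_fq using that by (rule non_odd_integer_step) simp
  assume "4 * x \<notin> of_int ` {a. odd a}"
  with assms show False
    using not_periodic_or_preperiodic_if_escaping[where m = "\<lambda>z. rat_denom (4 * z)", OF step]
    by blast
qed

lemma periodic_or_preperiodic_fq_bounded:
  assumes "periodic_pt fq x \<or> preperiodic_pt fq x"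
  shows "\<bar>x\<bar> < 2"
proof (rule ccontr)
  have step: "2 \<le> \<bar>fq y\<bar> \<and> \<bar>y\<bar> < \<bar>fq y\<bar>" if "2 \<le> \<bar>y\<bar>" for y
  proof -
    have "2 * \<bar>y\<bar> \<le> y\<^sup>2"
      using mult_right_mono[OF that, of "\<bar>y\<bar>"] by (simp add: power2_eq_square)
    then show ?thesis
      using that by (simp add: fq_def)
  qed
  assume "\<not> \<bar>x\<bar> < 2"
  then have "2 \<le> \<bar>x\<bar>"
    by simp
  with assms show False
    using not_periodic_or_preperiodic_if_escaping[where m = abs, OF step] by blast
qed

lemma periodic_or_preperiodic_fq_candidates:
  assumes "periodic_pt fq x \<or> preperiodic_pt fq x"
  shows "x \<in> {-1/4, -7/4, 5/4, 1/4, 7/4, -5/4, 3/4, -3/4}"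
proof -
  obtain a where "odd a" and x: "x = of_int a / 4"
    using periodic_or_preperiodic_fq_four_times_odd[OF assms] by force
  have "-8 < a" "a < 8"
    using periodic_or_preperiodic_fq_bounded[OF assms] x by (simp_all add: abs_less_iff)
  with \<open>odd a\<close> have "a \<in> {-7, -5, -3, -1, 1, 3, 5, 7}"
    unfolding insert_iff empty_iff by presburger
  then show ?thesis
    using x by auto
qed

lemma fq_3_cycle: "fq (-1/4) = -7/4" "fq (-7/4) = 5/4" "fq (5/4) = -1/4"
  by (simp_all add: fq_def power2_eq_square)

lemma periodic_fq_3_cycle:
  assumes "x \<in> {-1/4, -7/4, 5/4}"
  shows "periodic_pt fq x"
  unfolding periodic_pt_def
  using assms by (intro exI[of _ 3])
    (elim insertE emptyE; hypsubst; simp add: numeral_eq_Suc fq_def power2_eq_square)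

lemma not_periodic_fq_tail:
  "\<not> periodic_pt fq (1/4)" "\<not> periodic_pt fq (7/4)" "\<not> periodic_pt fq (-5/4)"
  "\<not> periodic_pt fq (3/4)" "\<not> periodic_pt fq (-3/4)"
proof -
  have cycle_invariant: "y \<in> {-1/4, -7/4, 5/4} \<Longrightarrow> fq y \<in> {-1/4, -7/4, 5/4}" for y
    by (elim insertE emptyE; hypsubst; simp add: fq_def power2_eq_square)
  have tail_invariant: "y \<in> {-5/4, -1/4, -7/4, 5/4} \<Longrightarrow> fq y \<in> {-5/4, -1/4, -7/4, 5/4}" for y
    by (elim insertE emptyE; hypsubst; simp add: fq_def power2_eq_square)
  show "\<not> periodic_pt fq (1/4)" "\<not> periodic_pt fq (7/4)" "\<not> periodic_pt fq (-5/4)"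
    by (rule not_periodic_if_image_in_invariant[OF cycle_invariant];
        simp add: fq_def power2_eq_square)+
  show "\<not> periodic_pt fq (3/4)" "\<not> periodic_pt fq (-3/4)"
    by (rule not_periodic_if_image_in_invariant[OF tail_invariant];
        simp add: fq_def power2_eq_square)+
qed

lemma fq_funpow_2_candidates:
  assumes "x \<in> {-1/4, -7/4, 5/4, 1/4, 7/4, -5/4, 3/4, -3/4}"
  shows "(fq ^^ 2) x \<in> {-1/4, -7/4, 5/4}"
  using assms
  by (elim insertE emptyE; hypsubst; simp add: numeral_eq_Suc fq_def power2_eq_square)

theorem corollary4:
  shows "{x. periodic_pt fq x} = {-1/4, -7/4, 5/4}
    \<and> fq (-1/4) = -7/4 \<and> fq (-7/4) = 5/4 \<and> fq (5/4) = -1/4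
    \<and> card {x. periodic_pt fq x \<or> preperiodic_pt fq x} = 8
    \<and> finite {x. periodic_pt fq x \<or> preperiodic_pt fq x}"
proof -
  have periodic_or_preperiodic_points: "{x. periodic_pt fq x \<or> preperiodic_pt fq x}
      = {-1/4, -7/4, 5/4, 1/4, 7/4, -5/4, 3/4, -3/4}"
    using periodic_or_preperiodic_fq_candidates fq_funpow_2_candidates periodic_fq_3_cycle
    unfolding periodic_or_preperiodic_iff by blast
  have "{x. periodic_pt fq x} = {-1/4, -7/4, 5/4}"
    using periodic_or_preperiodic_fq_candidates not_periodic_fq_tail periodic_fq_3_cycle
    by blast
  then show ?thesis
    unfolding periodic_or_preperiodic_points using fq_3_cycle by simp
qed

end
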